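(* Let $d\ge1$ and let $I$ be a paving tropical ideal of degree $d+1$ in $\mathbb{B}[x_1^{\pm1},\dots,x_n^{\pm1},y_1^{\pm1},\dots,y_m^{\pm1}]$, with corresponding $\mathbb{Z}^{n+m}$-invariant $d$-partition $\mathcal{P}$ of $\mathbb{Z}^{n+m}$ (its set of hyperplanes of the underlying matroid). Identify $\mathbb{Z}^n$ with $\mathbb{Z}^n\times\{\mathbf 0\}\subset\mathbb{Z}^{n+m}$. (1) If no $S\in\mathcal{P}$ satisfies $\mathbb{Z}^n\subset S$, then $I\cap\mathbb{B}[x_1^{\pm1},\dots,x_n^{\pm1}]$ is a paving tropical ideal of degree $d+1$, corresponding to the $\mathbb{Z}^n$-invariant $d$-partition $\mathcal{P}|_{\mathbb{Z}^n}=\{S\cap\mathbb{Z}^n:S\in\mathcal{P},\ |S\cap\mathbb{Z}^n|\ge d\}$ of $\mathbb{Z}^n$. (2) If some $S\in\mathcal{P}$ satisfies $\mathbb{Z}^n\subset S$, then $I\cap\mathbb{B}[x_1^{\pm1},\dots,x_n^{\pm1}]$ is the paving tropical ideal of degree $d$ corresponding to the uniform $(d-1)$-partition of $\mathbb{Z}^n$ consisting of all subsets of size $d-1$ (i.e. its underlying matroid is the uniform matroid of rank $d$ on $\mathbb{Z}^n$).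
   Context: $\mathbb{B}=\{\infty,0\}$ with $\oplus=\min$ and multiplication $+$; $\operatorname{supp}(f)$ is the set of exponents with coefficient $\neq\infty$. A tropical ideal in a Laurent polynomial semiring over $\mathbb{B}$ is an ideal such that for all $f,g$ in it and $\mathbf u\in\operatorname{supp}(f)\cap\operatorname{supp}(g)$ there is $h$ in it with $\operatorname{supp}(f)\Delta\operatorname{supp}(g)\subset\operatorname{supp}(h)\subset(\operatorname{supp}(f)\cup\operatorname{supp}(g))\setminus\{\mathbf u\}$. The underlying matroid on the exponent lattice has as independent sets those containing no support of a polynomial of the ideal. The ideal is zero-dimensional of degree $r$ iff this matroid has finite rank $r$, and paving if moreover all circuits have size $r$ or $r+1$. Paving tropical ideals of degree $d+1$ in $\mathbb{B}[x_1^{\pm1},\dots,x_N^{\pm1}]$ correspond bijectively to $\mathbb{Z}^N$-invariant $d$-partitions of $\mathbb{Z}^N$, via the set of hyperplanes (maximal subsets of rank $d$) of the underlying matroid. A $d$-partition of a set $E$ is a collection of subsets (blocks) with at least two blocks, all of size $\ge d$, such that each $d$-subset of $E$ lies in exactly one block; $\mathbb{Z}^N$-invariance means invariance under all translations. *)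

theory Defs
  imports Main
begin

text \<open>A Laurent polynomial over the
Boolean tropical semifield B = {inf,0} is determined by its support, a finite subset of Z^N;
addition (min) is union of supports, multiplication is Minkowski sum of supports, and the
zero polynomial (all coefficients inf) has empty support.\<close>

definition lat :: "nat \<Rightarrow> int list set" where
  "lat N = {v. length v = N}"

definition vadd :: "int list \<Rightarrow> int list \<Rightarrow> int list" where
  "vadd u v = map2 (+) u v"

definition polys :: "nat \<Rightarrow> int list set set" where
  "polys N = {f. finite f \<and> f \<subseteq> lat N}"

definition mink :: "int list set \<Rightarrow> int list set \<Rightarrow> int list set" where
  "mink f g = {vadd u v | u v. u \<in> f \<and> v \<in> g}"

definition is_ideal :: "nat \<Rightarrow> int list set set \<Rightarrow> bool" where
  "is_ideal N I \<longleftrightarrow> I \<subseteq> polys N \<and> {} \<in> I \<and>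
     (\<forall>f\<in>I. \<forall>g\<in>I. f \<union> g \<in> I) \<and>
     (\<forall>f\<in>I. \<forall>g\<in>polys N. mink f g \<in> I)"

definition tropical_ideal :: "nat \<Rightarrow> int list set set \<Rightarrow> bool" where
  "tropical_ideal N I \<longleftrightarrow> is_ideal N I \<and>
     (\<forall>f\<in>I. \<forall>g\<in>I. \<forall>u\<in>f \<inter> g. \<exists>h\<in>I.
        (f - g) \<union> (g - f) \<subseteq> h \<and> h \<subseteq> (f \<union> g) - {u})"

definition indep :: "nat \<Rightarrow> int list set set \<Rightarrow> int list set \<Rightarrow> bool" where
  "indep N I A \<longleftrightarrow> A \<subseteq> lat N \<and> (\<forall>f\<in>I. f \<noteq> {} \<longrightarrow> \<not> f \<subseteq> A)"

definition circuit :: "nat \<Rightarrow> int list set set \<Rightarrow> int list set \<Rightarrow> bool" where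
  "circuit N I C \<longleftrightarrow> C \<subseteq> lat N \<and> \<not> indep N I C \<and> (\<forall>D. D \<subset> C \<longrightarrow> indep N I D)"

text \<open>Rank of a subset (meaningful when the matroid has finite rank).\<close>
definition mrank :: "nat \<Rightarrow> int list set set \<Rightarrow> int list set \<Rightarrow> nat" where
  "mrank N I X = Sup {card A | A. A \<subseteq> X \<and> finite A \<and> indep N I A}"

text \<open>Zero-dimensional of degree r: the underlying matroid has finite rank r.\<close>
definition zero_dim :: "nat \<Rightarrow> int list set set \<Rightarrow> nat \<Rightarrow> bool" where
  "zero_dim N I r \<longleftrightarrow> (\<forall>A. indep N I A \<longrightarrow> finite A \<and> card A \<le> r) \<and>
     (\<exists>A. indep N I A \<and> finite A \<and> card A = r)"

definition paving :: "nat \<Rightarrow> int list set set \<Rightarrow> nat \<Rightarrow> bool" where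
  "paving N I r \<longleftrightarrow> zero_dim N I r \<and>
     (\<forall>C. circuit N I C \<longrightarrow> finite C \<and> (card C = r \<or> card C = r + 1))"

text \<open>Hyperplanes: maximal subsets of the ground set of rank d (d = degree - 1).\<close>
definition hyperplanes :: "nat \<Rightarrow> int list set set \<Rightarrow> nat \<Rightarrow> int list set set" where
  "hyperplanes N I d = {H. H \<subseteq> lat N \<and> mrank N I H = d \<and>
      (\<forall>H'. H \<subset> H' \<and> H' \<subseteq> lat N \<longrightarrow> mrank N I H' \<noteq> d)}"

definition atleast :: "nat \<Rightarrow> 'a set \<Rightarrow> bool" where
  "atleast k X \<longleftrightarrow> (\<exists>Y\<subseteq>X. finite Y \<and> card Y = k)"

definition d_partition :: "'a set \<Rightarrow> nat \<Rightarrow> 'a set set \<Rightarrow> bool" where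
  "d_partition E d P \<longleftrightarrow> (\<forall>S\<in>P. S \<subseteq> E \<and> atleast d S) \<and>
     (\<exists>S\<in>P. \<exists>T\<in>P. S \<noteq> T) \<and>
     (\<forall>D. D \<subseteq> E \<and> finite D \<and> card D = d \<longrightarrow> (\<exists>!S. S \<in> P \<and> D \<subseteq> S))"

definition translation_invariant :: "nat \<Rightarrow> int list set set \<Rightarrow> bool" where
  "translation_invariant N P \<longleftrightarrow> (\<forall>S\<in>P. \<forall>v\<in>lat N. (\<lambda>u. vadd u v) ` S \<in> P)"

definition emb :: "nat \<Rightarrow> int list \<Rightarrow> int list" where
  "emb m v = v @ replicate m 0"

text \<open>I \<inter> B[x_1..x_n], viewed as a set of polynomials in the x variables only.\<close>
definition restrict_ideal :: "nat \<Rightarrow> nat \<Rightarrow> int list set set \<Rightarrow> int list set set" where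
  "restrict_ideal n m I = {g \<in> polys n. emb m ` g \<in> I}"

definition restrict_partition :: "nat \<Rightarrow> nat \<Rightarrow> nat \<Rightarrow> int list set set \<Rightarrow> int list set set" where
  "restrict_partition n m d P =
     {{v \<in> lat n. emb m v \<in> S} | S. S \<in> P \<and> atleast d {v \<in> lat n. emb m v \<in> S}}"

end

theory Submission
  imports Defs
begin

text \<open>Restricting the ideal to \<open>\<int>\<^sup>n\<close> restricts its underlying matroid to the copy
\<open>\<int>\<^sup>n \<times> {0}\<close>: a set of exponents is independent for \<open>I \<inter> \<bool>[x\<^sup>\<plusminus>]\<close> iff its image is
independent for \<open>I\<close>, so ranks are preserved. In a paving matroid of rank \<open>d + 1\<close> coming from a
tropical ideal every \<open>d\<close>-set is independent, and circuit elimination makes every hyperplane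
closed: it contains each \<open>x\<close> that is dependent on one of its \<open>d\<close>-subsets. If \<open>\<int>\<^sup>n\<close> lies in no
hyperplane, it has full rank \<open>d + 1\<close>, and the hyperplanes of the restriction are exactly the
traces of the hyperplanes that still have at least \<open>d\<close> points. Otherwise \<open>\<int>\<^sup>n\<close> has rank \<open>d\<close>
while all its \<open>d\<close>-subsets are independent, so the restriction is uniform of rank \<open>d\<close>.\<close>

lemma indep_subset: "indep N I B \<Longrightarrow> A \<subseteq> B \<Longrightarrow> indep N I A"
  unfolding indep_def by blast

lemma indep_iff_no_support: "indep N I A \<longleftrightarrow> A \<subseteq> lat N \<and> \<not> (\<exists>f\<in>I. f \<noteq> {} \<and> f \<subseteq> A)"
  unfolding indep_def by blast

lemma indep_empty: "indep N I {}"
  unfolding indep_def by auto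

lemma atleast_iff: "atleast k X \<longleftrightarrow> infinite X \<or> k \<le> card X"
proof
  assume "atleast k X"
  then obtain Y where "Y \<subseteq> X" "card Y = k" unfolding atleast_def by blast
  then show "infinite X \<or> k \<le> card X" using card_mono by blast
next
  assume "infinite X \<or> k \<le> card X"
  then show "atleast k X"
    unfolding atleast_def
    by (metis infinite_arbitrarily_large obtain_subset_with_card_n rev_finite_subset)
qed

lemma infinite_lat: "n \<ge> 1 \<Longrightarrow> infinite (lat n)"
proof
  assume "n \<ge> 1" "finite (lat n)"
  have "range (\<lambda>k::int. k # replicate (n - 1) 0) \<subseteq> lat n"
    using \<open>n \<ge> 1\<close> unfolding lat_def by auto
  moreover have "inj (\<lambda>k::int. k # replicate (n - 1) 0)" unfolding inj_def by simp
  ultimately show False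
    using \<open>finite (lat n)\<close> finite_subset finite_imageD infinite_UNIV_int by blast
qed

section \<open>Rank in a matroid of finite rank\<close>

locale finite_rank =
  fixes N :: nat and I :: "int list set set" and r :: nat
  assumes indep_bounded: "\<And>A. indep N I A \<Longrightarrow> finite A \<and> card A \<le> r"
begin

lemma finite_indep_cards: "finite {card A |A. A \<subseteq> X \<and> finite A \<and> indep N I A}"
proof -
  have "{card A |A. A \<subseteq> X \<and> finite A \<and> indep N I A} \<subseteq> {..r}"
    using indep_bounded by auto
  then show ?thesis using finite_subset by blast
qed

lemma mrank_eq_Max: "mrank N I X = Max {card A |A. A \<subseteq> X \<and> finite A \<and> indep N I A}"
proof -
  have "{card A |A. A \<subseteq> X \<and> finite A \<and> indep N I A} \<noteq> {}"
    using indep_empty by auto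
  then show ?thesis unfolding mrank_def by (rule cSup_eq_Max[OF finite_indep_cards])
qed

lemma card_le_mrank: "A \<subseteq> X \<Longrightarrow> indep N I A \<Longrightarrow> card A \<le> mrank N I X"
  unfolding mrank_eq_Max using indep_bounded by (blast intro: Max_ge[OF finite_indep_cards])

lemma mrank_attained: "\<exists>A. A \<subseteq> X \<and> finite A \<and> indep N I A \<and> card A = mrank N I X"
proof -
  have "{card A |A. A \<subseteq> X \<and> finite A \<and> indep N I A} \<noteq> {}"
    using indep_empty by auto
  then have "mrank N I X \<in> {card A |A. A \<subseteq> X \<and> finite A \<and> indep N I A}"
    unfolding mrank_eq_Max by (rule Max_in[OF finite_indep_cards])
  then show ?thesis by auto
qed

lemma mrank_mono: assumes "X \<subseteq> Y" shows "mrank N I X \<le> mrank N I Y"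
proof -
  obtain A where "A \<subseteq> X" "indep N I A" "card A = mrank N I X" using mrank_attained by blast
  then show ?thesis using card_le_mrank[of A Y] assms by simp
qed

lemma mrank_le_bound: "mrank N I X \<le> r"
  using mrank_attained[of X] indep_bounded by force

lemma mrank_indep: assumes "indep N I D" "finite D" shows "mrank N I D = card D"
proof -
  obtain A where A: "A \<subseteq> D" "card A = mrank N I D" using mrank_attained by blast
  then have "mrank N I D \<le> card D" using card_mono[OF assms(2) A(1)] by simp
  then show ?thesis using card_le_mrank[OF order_refl assms(1)] by simp
qed

end

section \<open>Translations\<close>

abbreviation (input) translate :: "int list \<Rightarrow> int list \<Rightarrow> int list" where
  "translate v \<equiv> \<lambda>u. vadd u v"

lemma length_vadd [simp]: "length (vadd u v) = min (length u) (length v)"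
  unfolding vadd_def by simp

lemma vadd_uminus_cancel: "length u = length w \<Longrightarrow> vadd (vadd u w) (map uminus w) = u"
proof (induction u arbitrary: w)
  case Nil
  then show ?case by (simp add: vadd_def)
next
  case (Cons a u)
  then show ?case by (cases w) (auto simp: vadd_def)
qed

lemma mink_singleton: "mink f {w} = translate w ` f"
  unfolding mink_def by auto

lemma translate_image_lat: "v \<in> lat N \<Longrightarrow> X \<subseteq> lat N \<Longrightarrow> translate v ` X \<subseteq> lat N"
  unfolding lat_def by auto

lemma uminus_lat: "v \<in> lat N \<Longrightarrow> map uminus v \<in> lat N"
  unfolding lat_def by auto

lemma translate_back_image:
  assumes "v \<in> lat N" "X \<subseteq> lat N"
  shows "translate (map uminus v) ` translate v ` X = X"
proof -
  have "translate (map uminus v) ` translate v ` X = (\<lambda>u. vadd (vadd u v) (map uminus v)) ` X"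
    by (simp add: image_image)
  also have "\<dots> = id ` X"
    using assms vadd_uminus_cancel unfolding lat_def by (intro image_cong) auto
  finally show ?thesis by simp
qed

lemma inj_on_translate: "v \<in> lat N \<Longrightarrow> inj_on (translate v) (lat N)"
  by (rule inj_on_inverseI[where g = "translate (map uminus v)"])
    (simp add: vadd_uminus_cancel lat_def)

lemma indep_translate:
  assumes I: "is_ideal N I" and v: "v \<in> lat N" and A: "A \<subseteq> lat N" "indep N I A"
  shows "indep N I (translate v ` A)"
  unfolding indep_def
proof (intro conjI ballI impI)
  show "translate v ` A \<subseteq> lat N" using translate_image_lat v A by blast
  fix f assume f: "f \<in> I" "f \<noteq> {}"
  show "\<not> f \<subseteq> translate v ` A"
  proof
    assume "f \<subseteq> translate v ` A"
    then have sub: "translate (map uminus v) ` f \<subseteq> A"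
      using image_mono translate_back_image[OF v A(1)] by metis
    have "{map uminus v} \<in> polys N" using uminus_lat[OF v] unfolding polys_def by auto
    then have "translate (map uminus v) ` f \<in> I"
      using I f(1) unfolding is_ideal_def mink_singleton[symmetric] by blast
    moreover have "translate (map uminus v) ` f \<noteq> {}" using f(2) by blast
    ultimately show False using A(2) sub unfolding indep_def by (meson bspec)
  qed
qed

context finite_rank
begin

lemma mrank_translate:
  assumes I: "is_ideal N I" and v: "v \<in> lat N" and X: "X \<subseteq> lat N"
  shows "mrank N I (translate v ` X) = mrank N I X"
proof -
  have le: "mrank N I X \<le> mrank N I (translate w ` X)" if w: "w \<in> lat N" and X: "X \<subseteq> lat N"
    for w X
  proof -
    obtain A where A: "A \<subseteq> X" "finite A" "indep N I A" "card A = mrank N I X"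
      using mrank_attained by blast
    have "card (translate w ` A) = card A"
      using card_image[OF inj_on_subset[OF inj_on_translate[OF w]]] A X by blast
    moreover have "indep N I (translate w ` A)" using indep_translate[OF I w] A X by blast
    ultimately show ?thesis using card_le_mrank[of "translate w ` A"] A by (simp add: image_mono)
  qed
  show ?thesis
    using le[OF uminus_lat[OF v] translate_image_lat[OF v X]] le[OF v X]
    unfolding translate_back_image[OF v X] by simp
qed

lemma translation_invariant_hyperplanes:
  assumes I: "is_ideal N I"
  shows "translation_invariant N (hyperplanes N I k)"
  unfolding translation_invariant_def
proof (intro ballI)
  fix S v assume S: "S \<in> hyperplanes N I k" and v: "v \<in> lat N"
  have Sl: "S \<subseteq> lat N" and mS: "mrank N I S = k" using S unfolding hyperplanes_def by auto
  show "translate v ` S \<in> hyperplanes N I k"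
    unfolding hyperplanes_def
  proof (intro CollectI conjI allI impI)
    show "translate v ` S \<subseteq> lat N" using translate_image_lat v Sl by blast
    show "mrank N I (translate v ` S) = k" using mrank_translate[OF I v Sl] mS by simp
    fix H assume H: "translate v ` S \<subset> H \<and> H \<subseteq> lat N"
    let ?S' = "translate (map uminus v) ` H"
    have H_back: "translate v ` ?S' = H"
      using translate_back_image[OF uminus_lat[OF v], of H] H by (simp add: comp_def)
    have "S \<subset> ?S'"
      using H H_back image_mono[of "translate v ` S" H "translate (map uminus v)"]
      unfolding translate_back_image[OF v Sl] by blast
    moreover have "?S' \<subseteq> lat N" using translate_image_lat[OF uminus_lat[OF v]] H by blast
    ultimately have "mrank N I ?S' \<noteq> k" using S unfolding hyperplanes_def by blast
    then show "mrank N I H \<noteq> k" using mrank_translate[OF I uminus_lat[OF v], of H] H by simp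
  qed
qed

end

section \<open>Hyperplanes of a paving tropical ideal\<close>

locale paving_tropical =
  fixes N :: nat and I :: "int list set set" and d :: nat
  assumes tropical: "tropical_ideal N I" and paving: "paving N I (d + 1)" and d_pos: "d \<ge> 1"
begin

sublocale finite_rank N I "d + 1"
  using paving unfolding paving_def zero_dim_def by unfold_locales blast

lemma ideal_subset_polys: "I \<subseteq> polys N"
  using tropical unfolding tropical_ideal_def is_ideal_def by blast

lemma elimination: "f \<in> I \<Longrightarrow> g \<in> I \<Longrightarrow> u \<in> f \<inter> g \<Longrightarrow>
    \<exists>h\<in>I. (f - g) \<union> (g - f) \<subseteq> h \<and> h \<subseteq> (f \<union> g) - {u}"
  using tropical unfolding tropical_ideal_def by blast

lemma indep_if_card_le: "A \<subseteq> lat N \<Longrightarrow> finite A \<Longrightarrow> card A \<le> d \<Longrightarrow> indep N I A"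
proof (induction "card A" arbitrary: A rule: less_induct)
  case less
  show ?case
  proof (rule ccontr)
    assume "\<not> indep N I A"
    moreover have "indep N I D" if "D \<subset> A" for D
      using less that psubset_card_mono[of A D] finite_subset[of D A] by auto
    ultimately have "circuit N I A" using less.prems unfolding circuit_def by blast
    then have "card A = d + 1 \<or> card A = d + 2" using paving unfolding paving_def by auto
    then show False using less.prems by auto
  qed
qed

lemma dependent_mem_ideal:
  assumes "X \<subseteq> lat N" "finite X" "card X = d + 1" "\<not> indep N I X"
  shows "X \<in> I"
proof -
  obtain f where f: "f \<in> I" "f \<noteq> {}" "f \<subseteq> X" using assms unfolding indep_def by blast
  have "\<not> indep N I f" using f unfolding indep_def by blast
  moreover have "finite f" "f \<subseteq> lat N" using f(3) assms(1,2) finite_subset by auto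
  ultimately have "\<not> card f \<le> d" using indep_if_card_le by blast
  then have "f = X" using card_subset_eq[OF assms(2) f(3)] card_mono[OF assms(2) f(3)] assms(3)
    by simp
  then show ?thesis using f by simp
qed

lemma dependent_exchange_step:
  assumes D: "finite D" "card D = d" and u: "u \<in> D"
    and xy: "x \<notin> D" "y \<notin> D" "x \<noteq> y" "insert x (insert y D) \<subseteq> lat N"
    and dep: "\<not> indep N I (insert x D)" "\<not> indep N I (insert y D)"
  shows "\<not> indep N I (insert x (insert y (D - {u})))"
proof -
  have xD: "insert x D \<in> I" and yD: "insert y D \<in> I"
    using dependent_mem_ideal dep D xy by auto
  obtain h where h: "h \<in> I" "(insert x D - insert y D) \<union> (insert y D - insert x D) \<subseteq> h"
      "h \<subseteq> (insert x D \<union> insert y D) - {u}"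
    using elimination[OF xD yD, of u] u by blast
  define T where "T = insert x (insert y (D - {u}))"
  have "x \<in> h" using h(2) xy by blast
  then have h_dep: "\<not> indep N I h" using h(1) unfolding indep_def by blast
  have hT: "h \<subseteq> T" using h(3) unfolding T_def by blast
  have "finite h" "h \<subseteq> lat N" using ideal_subset_polys h(1) unfolding polys_def by auto
  then have "\<not> card h \<le> d" using indep_if_card_le h_dep by blast
  moreover have "card T = d + 1" "finite T"
    unfolding T_def using D u xy d_pos by (auto simp: card_Diff_singleton)
  ultimately have "h = T" using card_subset_eq[OF _ hT] card_mono[OF _ hT] by simp
  then show ?thesis using h_dep unfolding T_def by simp
qed

text \<open>Outside a set \<open>H\<close> of rank at most \<open>d\<close>, dependence on one \<open>d\<close>-subset of \<open>H\<close> is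
dependence on all of them: trade the elements of \<open>D\<close> one by one for those of \<open>B\<close>.\<close>

lemma dependent_exchange:
  assumes H: "H \<subseteq> lat N" "\<And>A. A \<subseteq> H \<Longrightarrow> indep N I A \<Longrightarrow> card A \<le> d"
    and x: "x \<in> lat N" "x \<notin> H"
    and B: "B \<subseteq> H" "finite B" "card B = d"
    and D: "D \<subseteq> H" "finite D" "card D = d" and dep: "\<not> indep N I (insert x D)"
  shows "\<not> indep N I (insert x B)"
  using D dep
proof (induction "card (D - B)" arbitrary: D rule: less_induct)
  case less
  show ?case
  proof (cases "D = B")
    case True
    then show ?thesis using less.prems by simp
  next
    case False
    have "\<not> D \<subseteq> B" using False card_subset_eq[OF B(2), of D] less.prems B(3) by auto
    then obtain u where u: "u \<in> D" "u \<notin> B" by blast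
    have "\<not> B \<subseteq> D" using False card_subset_eq[OF less.prems(2), of B] less.prems B(3) by auto
    then obtain y where y: "y \<in> B" "y \<notin> D" by blast
    have "card (insert y D) = d + 1" "insert y D \<subseteq> H"
      using less.prems y B(1) by auto
    then have "\<not> indep N I (insert y D)" using H(2)[of "insert y D"] by auto
    then have "\<not> indep N I (insert x (insert y (D - {u})))"
      using dependent_exchange_step[OF less.prems(2,3) u(1)] less.prems y x B(1) H(1) by blast
    moreover have "card (insert y (D - {u}) - B) < card (D - B)"
      using u y less.prems(2) by (auto intro: psubset_card_mono)
    moreover have "card (insert y (D - {u})) = d"
      using less.prems u y d_pos by (simp add: card_Diff_singleton)
    ultimately show ?thesis
      using less.hyps[of "insert y (D - {u})"] less.prems(1,2) y B(1) by blast
  qed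
qed

lemma card_indep_hyperplane: "H \<in> hyperplanes N I d \<Longrightarrow> A \<subseteq> H \<Longrightarrow> indep N I A \<Longrightarrow> card A \<le> d"
  using card_le_mrank unfolding hyperplanes_def by fastforce

lemma hyperplane_closed:
  assumes H: "H \<in> hyperplanes N I d" and D: "D \<subseteq> H" "finite D" "card D = d"
    and x: "x \<in> lat N" "\<not> indep N I (insert x D)"
  shows "x \<in> H"
proof (rule ccontr)
  assume xH: "x \<notin> H"
  have Hl: "H \<subseteq> lat N" using H unfolding hyperplanes_def by auto
  have "mrank N I (insert x H) \<noteq> d" using H xH x(1) Hl unfolding hyperplanes_def by blast
  moreover have "indep N I D" using indep_if_card_le D Hl by auto
  then have "d \<le> mrank N I (insert x H)" using card_le_mrank[of D "insert x H"] D by auto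
  ultimately have gt: "d < mrank N I (insert x H)" by linarith
  obtain B where B: "B \<subseteq> insert x H" "finite B" "indep N I B" "card B = mrank N I (insert x H)"
    using mrank_attained by blast
  have "x \<in> B"
  proof (rule ccontr)
    assume "x \<notin> B"
    then have "B \<subseteq> H" using B(1) by blast
    then show False using card_indep_hyperplane[OF H _ B(3)] B(4) gt by simp
  qed
  then have "d \<le> card (B - {x})" using B gt by simp
  then obtain B0 where B0: "B0 \<subseteq> B - {x}" "card B0 = d"
    using obtain_subset_with_card_n by metis
  have "\<not> indep N I (insert x B0)"
    using dependent_exchange[OF Hl card_indep_hyperplane[OF H] x(1) xH _ _ B0(2) D x(2)] B0 B
      finite_subset by blast
  moreover have "insert x B0 \<subseteq> B" using B0 \<open>x \<in> B\<close> by blast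
  ultimately show False using indep_subset B(3) by blast
qed

lemma exists_hyperplane_superset:
  assumes Y: "Y \<subseteq> lat N" "mrank N I Y = d"
  shows "\<exists>H \<in> hyperplanes N I d. Y \<subseteq> H"
proof -
  define F where "F = {H. Y \<subseteq> H \<and> H \<subseteq> lat N \<and> mrank N I H = d}"
  have "\<Union>C \<in> F" if C: "C \<noteq> {}" "subset.chain F C" for C
  proof -
    have CF: "C \<subseteq> F" using C unfolding subset.chain_def by blast
    then have YU: "Y \<subseteq> \<Union>C" and UL: "\<Union>C \<subseteq> lat N"
      using C(1) unfolding F_def by blast+
    have "d \<le> mrank N I (\<Union>C)" using mrank_mono[OF YU] Y(2) by simp
    moreover obtain B where B: "B \<subseteq> \<Union>C" "finite B" "indep N I B" "card B = mrank N I (\<Union>C)"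
      using mrank_attained by blast
    obtain H where "H \<in> C" "B \<subseteq> H" using finite_subset_Union_chain[OF B(2,1) C] by blast
    then have "card B \<le> d" using card_le_mrank[OF _ B(3)] CF unfolding F_def by force
    ultimately show ?thesis using B(4) YU UL unfolding F_def by simp
  qed
  moreover have "F \<noteq> {}" using Y unfolding F_def by blast
  ultimately obtain M where M: "M \<in> F" "\<forall>X\<in>F. M \<subseteq> X \<longrightarrow> X = M"
    using subset_Zorn_nonempty[of F] by blast
  have "M \<in> hyperplanes N I d"
    unfolding hyperplanes_def
  proof (intro CollectI conjI allI impI)
    show "M \<subseteq> lat N" "mrank N I M = d" using M(1) unfolding F_def by blast+
    fix H assume H: "M \<subset> H \<and> H \<subseteq> lat N"
    show "mrank N I H \<noteq> d"
    proof
      assume "mrank N I H = d"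
      then have "H \<in> F" using M(1) H unfolding F_def by blast
      then show False using M(2) H by blast
    qed
  qed
  then show ?thesis using M(1) unfolding F_def by blast
qed

lemma hyperplane_unique:
  assumes H: "H \<in> hyperplanes N I d" "H' \<in> hyperplanes N I d"
    and D: "D \<subseteq> H" "D \<subseteq> H'" "finite D" "card D = d"
  shows "H = H'"
proof -
  have "H' \<subseteq> H" if H: "H \<in> hyperplanes N I d" "H' \<in> hyperplanes N I d" "D \<subseteq> H" "D \<subseteq> H'"
    for H H'
  proof
    fix x assume x: "x \<in> H'"
    show "x \<in> H"
    proof (cases "x \<in> D")
      case False
      have "\<not> indep N I (insert x D)"
        using card_indep_hyperplane[OF H(2), of "insert x D"] x H(4) False D(3,4) by auto
      moreover have "x \<in> lat N" using x H(2) unfolding hyperplanes_def by blast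
      ultimately show ?thesis using hyperplane_closed[OF H(1,3) D(3,4)] by blast
    qed (use H in blast)
  qed
  then show ?thesis using H D by blast
qed

lemma exists_two_hyperplanes: "\<exists>H\<in>hyperplanes N I d. \<exists>H'\<in>hyperplanes N I d. H \<noteq> H'"
proof -
  obtain B where B: "indep N I B" "finite B" "card B = d + 1"
    using paving unfolding paving_def zero_dim_def by blast
  have "\<not> card B \<le> Suc 0" using B(3) d_pos by simp
  then obtain b b' where b: "b \<in> B" "b' \<in> B" "b \<noteq> b'"
    using card_le_Suc0_iff_eq[OF B(2)] by blast
  have "\<exists>H \<in> hyperplanes N I d. B - {c} \<subseteq> H" if "c \<in> B" for c
  proof (rule exists_hyperplane_superset)
    show "B - {c} \<subseteq> lat N" using B(1) unfolding indep_def by blast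
    show "mrank N I (B - {c}) = d"
      using mrank_indep[OF indep_subset[OF B(1)]] B that by simp
  qed
  then obtain H H' where H: "H \<in> hyperplanes N I d" "B - {b} \<subseteq> H"
    and H': "H' \<in> hyperplanes N I d" "B - {b'} \<subseteq> H'"
    using b by meson
  have "H \<noteq> H'"
  proof
    assume "H = H'"
    then have "B \<subseteq> H" using H H' b by blast
    then show False using card_indep_hyperplane[OF H(1) _ B(1)] B(3) by simp
  qed
  then show ?thesis using H H' by blast
qed

lemma d_partition_hyperplanes: "d_partition (lat N) d (hyperplanes N I d)"
  unfolding d_partition_def
proof (intro conjI ballI allI impI)
  fix S assume S: "S \<in> hyperplanes N I d"
  then show "S \<subseteq> lat N" unfolding hyperplanes_def by blast
  obtain A where "A \<subseteq> S" "finite A" "card A = mrank N I S" using mrank_attained by blast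
  then show "atleast d S" using S unfolding atleast_def hyperplanes_def by auto
next
  show "\<exists>S\<in>hyperplanes N I d. \<exists>T\<in>hyperplanes N I d. S \<noteq> T" by (rule exists_two_hyperplanes)
next
  fix D assume D: "D \<subseteq> lat N \<and> finite D \<and> card D = d"
  then have "mrank N I D = d" using mrank_indep indep_if_card_le by simp
  then obtain H where "H \<in> hyperplanes N I d" "D \<subseteq> H" using exists_hyperplane_superset D by blast
  then show "\<exists>!S. S \<in> hyperplanes N I d \<and> D \<subseteq> S" using hyperplane_unique D by blast
qed

end

section \<open>Uniform matroids\<close>

locale uniform_rank =
  fixes N :: nat and J :: "int list set set" and r :: nat
  assumes indep_iff: "\<And>A. indep N J A \<longleftrightarrow> A \<subseteq> lat N \<and> finite A \<and> card A \<le> r"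
    and infinite_ground: "infinite (lat N)"
begin

sublocale finite_rank N J r
  by unfold_locales (simp add: indep_iff)

lemma paving_uniform: "paving N J r"
  unfolding paving_def zero_dim_def
proof (intro conjI)
  show "\<forall>A. indep N J A \<longrightarrow> finite A \<and> card A \<le> r" using indep_iff by blast
  have "atleast r (lat N)" using infinite_ground atleast_iff by blast
  then obtain D where "D \<subseteq> lat N" "finite D" "card D = r" unfolding atleast_def by blast
  then show "\<exists>A. indep N J A \<and> finite A \<and> card A = r" using indep_iff by blast
  show "\<forall>C. circuit N J C \<longrightarrow> finite C \<and> (card C = r \<or> card C = r + 1)"
  proof (intro allI impI)
    fix C assume "circuit N J C"
    then have dep: "\<not> indep N J C" and proper: "\<And>D. D \<subset> C \<Longrightarrow> indep N J D"
      and "C \<subseteq> lat N"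
      unfolding circuit_def by auto
    have "C \<noteq> {}" using dep indep_empty by metis
    then obtain c where c: "c \<in> C" by blast
    then have "finite (C - {c})" "card (C - {c}) \<le> r" using proper indep_iff by blast+
    then show "finite C \<and> (card C = r \<or> card C = r + 1)"
      using c dep indep_iff[of C] \<open>C \<subseteq> lat N\<close> by (auto simp: card_Diff_singleton)
  qed
qed

lemma hyperplanes_uniform:
  assumes "r \<ge> 1"
  shows "hyperplanes N J (r - 1) = {D. D \<subseteq> lat N \<and> finite D \<and> card D = r - 1}"
proof (intro equalityI subsetI)
  fix X assume X: "X \<in> hyperplanes N J (r - 1)"
  then have Xl: "X \<subseteq> lat N" and mX: "mrank N J X = r - 1" unfolding hyperplanes_def by auto
  have "\<not> atleast r X"
  proof
    assume "atleast r X"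
    then obtain D where "D \<subseteq> X" "finite D" "card D = r" unfolding atleast_def by blast
    moreover have "indep N J D" using \<open>D \<subseteq> X\<close> \<open>finite D\<close> \<open>card D = r\<close> Xl indep_iff by auto
    ultimately show False using card_le_mrank[of D X] mX assms by simp
  qed
  then have "finite X" "card X \<le> r - 1" using assms unfolding atleast_iff by auto
  then have "card X = r - 1" using mrank_indep indep_iff Xl mX assms by simp
  then show "X \<in> {D. D \<subseteq> lat N \<and> finite D \<and> card D = r - 1}" using Xl \<open>finite X\<close> by blast
next
  fix X assume "X \<in> {D. D \<subseteq> lat N \<and> finite D \<and> card D = r - 1}"
  then have Xl: "X \<subseteq> lat N" and fX: "finite X" and cX: "card X = r - 1" by auto
  show "X \<in> hyperplanes N J (r - 1)"
    unfolding hyperplanes_def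
  proof (intro CollectI conjI allI impI)
    show "X \<subseteq> lat N" by fact
    show "mrank N J X = r - 1" using mrank_indep indep_iff Xl fX cX by simp
    fix H assume H: "X \<subset> H \<and> H \<subseteq> lat N"
    then obtain y where y: "y \<in> H" "y \<notin> X" by blast
    then have "card (insert y X) = r" "insert y X \<subseteq> H" using cX fX H assms by auto
    moreover have "indep N J (insert y X)" using indep_iff y H Xl fX \<open>card (insert y X) = r\<close> by auto
    ultimately have "r \<le> mrank N J H" using card_le_mrank[of "insert y X" H] by simp
    then show "mrank N J H \<noteq> r - 1" using assms by simp
  qed
qed

end

section \<open>Restriction to the sublattice \<open>\<int>\<^sup>n \<times> {0}\<close>\<close>

lemma length_emb [simp]: "length (emb m v) = length v + m"
  unfolding emb_def by simp

lemma inj_emb: "inj (emb m)"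
  unfolding inj_def emb_def by auto

lemma card_image_emb [simp]: "card (emb m ` A) = card A"
  by (rule card_image) (rule inj_on_subset[OF inj_emb subset_UNIV])

lemma finite_image_emb [simp]: "finite (emb m ` A) \<longleftrightarrow> finite A"
  by (rule finite_image_iff) (rule inj_on_subset[OF inj_emb subset_UNIV])

lemma emb_lat: "v \<in> lat n \<Longrightarrow> emb m v \<in> lat (n + m)"
  unfolding lat_def by simp

lemma image_emb_lat: "X \<subseteq> lat n \<Longrightarrow> emb m ` X \<subseteq> lat (n + m)"
  using emb_lat by blast

lemma image_emb_preimage: "B \<subseteq> emb m ` X \<Longrightarrow> emb m ` {v \<in> X. emb m v \<in> B} = B"
  by blast

lemma emb_vadd: "length u = length v \<Longrightarrow> emb m (vadd u v) = vadd (emb m u) (emb m v)"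
proof -
  have "map2 (+) (replicate m (0::int)) (replicate m 0) = replicate m 0"
    by (induction m) auto
  then show "length u = length v \<Longrightarrow> ?thesis" unfolding emb_def vadd_def by (simp add: zip_append)
qed

lemma image_emb_mink:
  assumes "f \<subseteq> lat n" "g \<subseteq> lat n"
  shows "emb m ` mink f g = mink (emb m ` f) (emb m ` g)"
proof -
  have "emb m ` mink f g = {emb m (vadd u v) | u v. u \<in> f \<and> v \<in> g}"
    unfolding mink_def by blast
  also have "\<dots> = {vadd (emb m u) (emb m v) | u v. u \<in> f \<and> v \<in> g}"
  proof -
    have "\<And>u v. u \<in> f \<Longrightarrow> v \<in> g \<Longrightarrow> emb m (vadd u v) = vadd (emb m u) (emb m v)"
      using assms emb_vadd unfolding lat_def by blast
    then show ?thesis by metis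
  qed
  finally show ?thesis unfolding mink_def by blast
qed

lemma mink_polys: "f \<in> polys n \<Longrightarrow> g \<in> polys n \<Longrightarrow> mink f g \<in> polys n"
proof -
  assume "f \<in> polys n" "g \<in> polys n"
  moreover have "mink f g = (\<lambda>(u, v). vadd u v) ` (f \<times> g)" unfolding mink_def by auto
  ultimately show ?thesis unfolding polys_def lat_def by (auto simp: subset_iff)
qed

lemma is_ideal_restrict_ideal:
  assumes I: "is_ideal (n + m) I"
  shows "is_ideal n (restrict_ideal n m I)"
  unfolding is_ideal_def restrict_ideal_def
proof (intro conjI ballI)
  show "{} \<in> {g \<in> polys n. emb m ` g \<in> I}" using I unfolding is_ideal_def polys_def by auto
  fix f assume f: "f \<in> {g \<in> polys n. emb m ` g \<in> I}"
  show "f \<union> g \<in> {g \<in> polys n. emb m ` g \<in> I}" if "g \<in> {g \<in> polys n. emb m ` g \<in> I}" for g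
    using f that I unfolding is_ideal_def polys_def by (auto simp: image_Un)
  fix g assume g: "g \<in> polys n"
  then have "emb m ` g \<in> polys (n + m)" using image_emb_lat unfolding polys_def by auto
  then have "mink (emb m ` f) (emb m ` g) \<in> I" using f I unfolding is_ideal_def by blast
  then show "mink f g \<in> {g \<in> polys n. emb m ` g \<in> I}"
    using f g mink_polys image_emb_mink[of f n g m] unfolding polys_def by auto
qed blast

lemma tropical_ideal_restrict_ideal:
  assumes I: "tropical_ideal (n + m) I"
  shows "tropical_ideal n (restrict_ideal n m I)"
  unfolding tropical_ideal_def
proof (intro conjI ballI)
  show "is_ideal n (restrict_ideal n m I)"
    using I is_ideal_restrict_ideal unfolding tropical_ideal_def by blast
  fix f g u assume f: "f \<in> restrict_ideal n m I" and g: "g \<in> restrict_ideal n m I"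
    and u: "u \<in> f \<inter> g"
  then have "emb m ` f \<in> I" "emb m ` g \<in> I" "emb m u \<in> emb m ` f \<inter> emb m ` g"
    unfolding restrict_ideal_def by auto
  then obtain h where h: "h \<in> I" "(emb m ` f - emb m ` g) \<union> (emb m ` g - emb m ` f) \<subseteq> h"
      "h \<subseteq> (emb m ` f \<union> emb m ` g) - {emb m u}"
    using I unfolding tropical_ideal_def by blast
  define h' where "h' = {v \<in> f \<union> g. emb m v \<in> h}"
  have "emb m ` h' = h" unfolding h'_def using h(3) by blast
  moreover have "h' \<in> polys n" using f g unfolding h'_def polys_def restrict_ideal_def by auto
  ultimately have "h' \<in> restrict_ideal n m I" using h(1) unfolding restrict_ideal_def by simp
  moreover have "(f - g) \<union> (g - f) \<subseteq> h'"
    using h(2) inj_emb[of m] unfolding h'_def by (auto dest: injD)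
  moreover have "h' \<subseteq> (f \<union> g) - {u}" unfolding h'_def using h(3) by blast
  ultimately show "\<exists>h\<in>restrict_ideal n m I. f - g \<union> (g - f) \<subseteq> h \<and> h \<subseteq> f \<union> g - {u}"
    by blast
qed

lemma indep_restrict_ideal_iff:
  assumes I: "I \<subseteq> polys (n + m)"
  shows "indep n (restrict_ideal n m I) A \<longleftrightarrow> A \<subseteq> lat n \<and> indep (n + m) I (emb m ` A)"
proof (cases "A \<subseteq> lat n")
  case A: True
  have "(\<exists>f\<in>restrict_ideal n m I. f \<noteq> {} \<and> f \<subseteq> A) \<longleftrightarrow> (\<exists>g\<in>I. g \<noteq> {} \<and> g \<subseteq> emb m ` A)"
  proof
    assume "\<exists>g\<in>I. g \<noteq> {} \<and> g \<subseteq> emb m ` A"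
    then obtain g where g: "g \<in> I" "g \<noteq> {}" "g \<subseteq> emb m ` A" by blast
    define f where "f = {v \<in> A. emb m v \<in> g}"
    have "emb m ` f = g" unfolding f_def using image_emb_preimage[OF g(3)] .
    moreover have "finite g" using g(1) I unfolding polys_def by blast
    ultimately have "finite f" using finite_image_emb[of m f] by simp
    moreover have "f \<subseteq> lat n" using A unfolding f_def by blast
    ultimately have "f \<in> restrict_ideal n m I"
      using g(1) \<open>emb m ` f = g\<close> unfolding restrict_ideal_def polys_def by simp
    moreover have "f \<noteq> {}" using \<open>emb m ` f = g\<close> g(2) by blast
    moreover have "f \<subseteq> A" unfolding f_def by blast
    ultimately show "\<exists>f\<in>restrict_ideal n m I. f \<noteq> {} \<and> f \<subseteq> A" by blast
  next
    assume "\<exists>f\<in>restrict_ideal n m I. f \<noteq> {} \<and> f \<subseteq> A"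
    then obtain f where "emb m ` f \<in> I" "f \<noteq> {}" "f \<subseteq> A"
      unfolding restrict_ideal_def by blast
    then show "\<exists>g\<in>I. g \<noteq> {} \<and> g \<subseteq> emb m ` A" by (intro bexI[of _ "emb m ` f"]) auto
  qed
  then show ?thesis using A image_emb_lat[OF A] by (simp add: indep_iff_no_support)
qed (simp add: indep_def)

lemma mrank_restrict_ideal:
  assumes I: "I \<subseteq> polys (n + m)" and X: "X \<subseteq> lat n"
  shows "mrank n (restrict_ideal n m I) X = mrank (n + m) I (emb m ` X)"
proof -
  have "{card A |A. A \<subseteq> X \<and> finite A \<and> indep n (restrict_ideal n m I) A}
      = {card B |B. B \<subseteq> emb m ` X \<and> finite B \<and> indep (n + m) I B}"
  proof (intro equalityI subsetI)
    fix c assume "c \<in> {card A |A. A \<subseteq> X \<and> finite A \<and> indep n (restrict_ideal n m I) A}"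
    then obtain A where "c = card A" "A \<subseteq> X" "finite A" "indep n (restrict_ideal n m I) A"
      by blast
    then show "c \<in> {card B |B. B \<subseteq> emb m ` X \<and> finite B \<and> indep (n + m) I B}"
      using indep_restrict_ideal_iff[OF I, of A] by (auto intro!: exI[of _ "emb m ` A"])
  next
    fix c assume "c \<in> {card B |B. B \<subseteq> emb m ` X \<and> finite B \<and> indep (n + m) I B}"
    then obtain B where B: "c = card B" "B \<subseteq> emb m ` X" "finite B" "indep (n + m) I B" by blast
    define A where "A = {v \<in> X. emb m v \<in> B}"
    have "emb m ` A = B" unfolding A_def using image_emb_preimage[OF B(2)] .
    then have "finite A" "card A = card B" using B(3) card_image_emb[of m A] by auto
    then show "c \<in> {card A |A. A \<subseteq> X \<and> finite A \<and> indep n (restrict_ideal n m I) A}"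
      using B X indep_restrict_ideal_iff[OF I, of A] \<open>emb m ` A = B\<close>
      by (auto intro!: exI[of _ A] simp: A_def)
  qed
  then show ?thesis unfolding mrank_def by simp
qed

lemma circuit_restrict_ideal:
  assumes I: "I \<subseteq> polys (n + m)" and C: "circuit n (restrict_ideal n m I) C"
  shows "circuit (n + m) I (emb m ` C)"
  unfolding circuit_def
proof (intro conjI allI impI)
  have Cl: "C \<subseteq> lat n" using C unfolding circuit_def by blast
  then show "emb m ` C \<subseteq> lat (n + m)" using image_emb_lat by blast
  show "\<not> indep (n + m) I (emb m ` C)"
    using C Cl indep_restrict_ideal_iff[OF I, of C] unfolding circuit_def by simp
  fix D assume D: "D \<subset> emb m ` C"
  define D' where "D' = {v \<in> C. emb m v \<in> D}"
  have "emb m ` D' = D" unfolding D'_def using image_emb_preimage D by blast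
  moreover have "D' \<subset> C" using D \<open>emb m ` D' = D\<close> unfolding D'_def by blast
  then have "indep n (restrict_ideal n m I) D'" using C unfolding circuit_def by simp
  ultimately show "indep (n + m) I D" using indep_restrict_ideal_iff[OF I, of D'] by simp
qed

lemma finite_rank_restrict_ideal:
  assumes "paving_tropical (n + m) I d"
  shows "finite_rank n (restrict_ideal n m I) (d + 1)"
proof -
  interpret P: paving_tropical "n + m" I d by fact
  show ?thesis
    using P.indep_bounded by unfold_locales (force simp: indep_restrict_ideal_iff[OF P.ideal_subset_polys])
qed

lemma indep_restrict_ideal_if_card_le:
  assumes "paving_tropical (n + m) I d" "A \<subseteq> lat n" "finite A" "card A \<le> d"
  shows "indep n (restrict_ideal n m I) A"
proof -
  interpret P: paving_tropical "n + m" I d by fact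
  show ?thesis
    using P.indep_if_card_le[of "emb m ` A"] image_emb_lat assms(2-4)
    by (simp add: indep_restrict_ideal_iff[OF P.ideal_subset_polys])
qed

lemma hyperplane_restrict_ideal_is_trace:
  assumes P: "paving_tropical (n + m) I d" and X: "X \<in> hyperplanes n (restrict_ideal n m I) d"
  shows "X \<in> restrict_partition n m d (hyperplanes (n + m) I d)"
proof -
  interpret P: paving_tropical "n + m" I d by fact
  interpret J: finite_rank n "restrict_ideal n m I" "d + 1"
    using finite_rank_restrict_ideal[OF P] .
  note mrank_J = mrank_restrict_ideal[OF P.ideal_subset_polys]
  have Xl: "X \<subseteq> lat n" and mX: "mrank n (restrict_ideal n m I) X = d"
    using X unfolding hyperplanes_def by auto
  obtain S where S: "S \<in> hyperplanes (n + m) I d" "emb m ` X \<subseteq> S"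
    using P.exists_hyperplane_superset[OF image_emb_lat[OF Xl]] mX mrank_J[OF Xl] by auto
  define R where "R = {v \<in> lat n. emb m v \<in> S}"
  have XR: "X \<subseteq> R" and Rl: "R \<subseteq> lat n" using Xl S(2) unfolding R_def by blast+
  have "mrank (n + m) I (emb m ` R) \<le> mrank (n + m) I S"
    by (rule P.mrank_mono) (auto simp: R_def)
  then have "mrank n (restrict_ideal n m I) R \<le> d"
    using S(1) mrank_J[OF Rl] unfolding hyperplanes_def by simp
  then have "mrank n (restrict_ideal n m I) R = d" using J.mrank_mono[OF XR] mX by simp
  then have "X = R" using X XR Rl unfolding hyperplanes_def by blast
  moreover have "atleast d X"
    using J.mrank_attained[of X] mX unfolding atleast_def by auto
  ultimately show ?thesis unfolding restrict_partition_def R_def using S(1) by blast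
qed

lemma trace_mem_hyperplanes_restrict_ideal:
  assumes P: "paving_tropical (n + m) I d" and S: "S \<in> hyperplanes (n + m) I d"
    and X: "X = {v \<in> lat n. emb m v \<in> S}" "atleast d X"
  shows "X \<in> hyperplanes n (restrict_ideal n m I) d"
proof -
  interpret P: paving_tropical "n + m" I d by fact
  interpret J: finite_rank n "restrict_ideal n m I" "d + 1"
    using finite_rank_restrict_ideal[OF P] .
  have Xl: "X \<subseteq> lat n" and XS: "emb m ` X \<subseteq> S" using X(1) by blast+
  obtain D where D: "D \<subseteq> X" "finite D" "card D = d" using X(2) unfolding atleast_def by blast
  have D_indep: "indep n (restrict_ideal n m I) D"
    using indep_restrict_ideal_if_card_le[OF P] D Xl by auto
  have "mrank (n + m) I (emb m ` X) \<le> d"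
    using P.mrank_mono[OF XS] S unfolding hyperplanes_def by simp
  then have mX: "mrank n (restrict_ideal n m I) X = d"
    using mrank_restrict_ideal[OF P.ideal_subset_polys Xl] J.card_le_mrank[OF D(1) D_indep] D(3)
    by simp
  show ?thesis
    unfolding hyperplanes_def
  proof (intro CollectI conjI allI impI)
    show "X \<subseteq> lat n" "mrank n (restrict_ideal n m I) X = d" by fact+
    fix X' assume X': "X \<subset> X' \<and> X' \<subseteq> lat n"
    then obtain y where y: "y \<in> X'" "y \<notin> X" "y \<in> lat n" by blast
    show "mrank n (restrict_ideal n m I) X' \<noteq> d"
    proof
      assume mX': "mrank n (restrict_ideal n m I) X' = d"
      have "insert y D \<subseteq> X'" using y D X' by blast
      moreover have "y \<notin> D" using D(1) y(2) by blast
      then have "card (insert y D) = d + 1" using D by simp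
      ultimately have "\<not> indep n (restrict_ideal n m I) (insert y D)"
        using J.card_le_mrank[of "insert y D" X'] mX' by auto
      then have "\<not> indep (n + m) I (insert (emb m y) (emb m ` D))"
        using indep_restrict_ideal_iff[OF P.ideal_subset_polys] y(3) D(1) Xl by auto
      then have "emb m y \<in> S"
        using P.hyperplane_closed[OF S, of "emb m ` D"] D XS emb_lat[OF y(3), of m] by auto
      then show False using y X(1) by blast
    qed
  qed
qed

lemma hyperplanes_restrict_ideal:
  assumes "paving_tropical (n + m) I d"
  shows "hyperplanes n (restrict_ideal n m I) d = restrict_partition n m d (hyperplanes (n + m) I d)"
proof (intro equalityI subsetI)
  fix X assume "X \<in> restrict_partition n m d (hyperplanes (n + m) I d)"
  then obtain S where "S \<in> hyperplanes (n + m) I d" "X = {v \<in> lat n. emb m v \<in> S}" "atleast d X"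
    unfolding restrict_partition_def by blast
  then show "X \<in> hyperplanes n (restrict_ideal n m I) d"
    using trace_mem_hyperplanes_restrict_ideal[OF assms] by blast
qed (rule hyperplane_restrict_ideal_is_trace[OF assms])

lemma mrank_lat_if_in_no_hyperplane:
  assumes P: "paving_tropical (n + m) I d" and n: "n \<ge> 1"
    and no_hyp: "\<not> (\<exists>S\<in>hyperplanes (n + m) I d. emb m ` lat n \<subseteq> S)"
  shows "mrank (n + m) I (emb m ` lat n) = d + 1"
proof -
  interpret P: paving_tropical "n + m" I d by fact
  obtain D where D: "D \<subseteq> lat n" "finite D" "card D = d"
    using infinite_lat[OF n] atleast_iff[of d "lat n"] unfolding atleast_def by blast
  then have "indep (n + m) I (emb m ` D)" using P.indep_if_card_le image_emb_lat by simp
  then have "d \<le> mrank (n + m) I (emb m ` lat n)"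
    using P.card_le_mrank[of "emb m ` D"] D by (simp add: image_mono)
  moreover have "mrank (n + m) I (emb m ` lat n) \<noteq> d"
    using P.exists_hyperplane_superset[OF image_emb_lat[OF order_refl]] no_hyp by blast
  moreover have "mrank (n + m) I (emb m ` lat n) \<le> d + 1" by (rule P.mrank_le_bound)
  ultimately show ?thesis by linarith
qed

lemma paving_restrict_ideal:
  assumes P: "paving_tropical (n + m) I d" and full: "mrank (n + m) I (emb m ` lat n) = d + 1"
  shows "paving n (restrict_ideal n m I) (d + 1)"
proof -
  interpret P: paving_tropical "n + m" I d by fact
  interpret J: finite_rank n "restrict_ideal n m I" "d + 1"
    using finite_rank_restrict_ideal[OF P] .
  show ?thesis
    unfolding paving_def zero_dim_def
  proof (intro conjI)
    show "\<forall>A. indep n (restrict_ideal n m I) A \<longrightarrow> finite A \<and> card A \<le> d + 1"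
      using J.indep_bounded by blast
    show "\<exists>A. indep n (restrict_ideal n m I) A \<and> finite A \<and> card A = d + 1"
      using J.mrank_attained[of "lat n"] full mrank_restrict_ideal[OF P.ideal_subset_polys order_refl]
      by auto
    have "finite (emb m ` C) \<and> (card (emb m ` C) = d + 1 \<or> card (emb m ` C) = d + 1 + 1)"
      if "circuit n (restrict_ideal n m I) C" for C
      using circuit_restrict_ideal[OF P.ideal_subset_polys that] P.paving unfolding paving_def by blast
    then show "\<forall>C. circuit n (restrict_ideal n m I) C \<longrightarrow>
        finite C \<and> (card C = d + 1 \<or> card C = d + 1 + 1)"
      by simp
  qed
qed

lemma uniform_rank_restrict_ideal:
  assumes P: "paving_tropical (n + m) I d" and n: "n \<ge> 1"
    and S: "S \<in> hyperplanes (n + m) I d" "emb m ` lat n \<subseteq> S"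
  shows "uniform_rank n (restrict_ideal n m I) d"
proof
  interpret P: paving_tropical "n + m" I d by fact
  interpret J: finite_rank n "restrict_ideal n m I" "d + 1"
    using finite_rank_restrict_ideal[OF P] .
  fix A
  show "indep n (restrict_ideal n m I) A \<longleftrightarrow> A \<subseteq> lat n \<and> finite A \<and> card A \<le> d"
  proof
    assume A: "indep n (restrict_ideal n m I) A"
    then have "A \<subseteq> lat n" "indep (n + m) I (emb m ` A)"
      using indep_restrict_ideal_iff[OF P.ideal_subset_polys] by auto
    moreover from this have "card (emb m ` A) \<le> d"
      using P.card_indep_hyperplane[OF S(1)] S(2) by (meson image_mono order_trans)
    ultimately show "A \<subseteq> lat n \<and> finite A \<and> card A \<le> d" using J.indep_bounded[OF A] by simp
  qed (use indep_restrict_ideal_if_card_le[OF P] in blast)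
next
  show "infinite (lat n)" using infinite_lat[OF n] .
qed

theorem mainTheorem10:
  fixes n m d :: nat and I :: "int list set set"
  assumes "d \<ge> 1" and "n \<ge> 1"
    and "tropical_ideal (n + m) I" and "paving (n + m) I (d + 1)"
  shows "(\<not> (\<exists>S\<in>hyperplanes (n + m) I d. emb m ` lat n \<subseteq> S) \<longrightarrow>
           tropical_ideal n (restrict_ideal n m I) \<and>
           paving n (restrict_ideal n m I) (d + 1) \<and>
           d_partition (lat n) d (restrict_partition n m d (hyperplanes (n + m) I d)) \<and>
           translation_invariant n (restrict_partition n m d (hyperplanes (n + m) I d)) \<and>
           hyperplanes n (restrict_ideal n m I) d =
             restrict_partition n m d (hyperplanes (n + m) I d))
       \<and> ((\<exists>S\<in>hyperplanes (n + m) I d. emb m ` lat n \<subseteq> S) \<longrightarrow>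
           tropical_ideal n (restrict_ideal n m I) \<and>
           paving n (restrict_ideal n m I) d \<and>
           (\<forall>A. indep n (restrict_ideal n m I) A \<longleftrightarrow>
                  A \<subseteq> lat n \<and> finite A \<and> card A \<le> d) \<and>
           hyperplanes n (restrict_ideal n m I) (d - 1) =
             {D. D \<subseteq> lat n \<and> finite D \<and> card D = d - 1})"
proof -
  have P: "paving_tropical (n + m) I d" using assms by unfold_locales
  have trop: "tropical_ideal n (restrict_ideal n m I)"
    using tropical_ideal_restrict_ideal[OF assms(3)] .
  show ?thesis
  proof (intro conjI impI)
    assume "\<not> (\<exists>S\<in>hyperplanes (n + m) I d. emb m ` lat n \<subseteq> S)"
    then have pav: "paving n (restrict_ideal n m I) (d + 1)"
      using paving_restrict_ideal[OF P] mrank_lat_if_in_no_hyperplane[OF P assms(2)] by blast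
    then interpret J: paving_tropical n "restrict_ideal n m I" d
      using trop assms(1) by unfold_locales
    have "is_ideal n (restrict_ideal n m I)" using trop unfolding tropical_ideal_def by blast
    note hyperplanes_eq = hyperplanes_restrict_ideal[OF P]
    show "tropical_ideal n (restrict_ideal n m I)" "paving n (restrict_ideal n m I) (d + 1)"
      "hyperplanes n (restrict_ideal n m I) d = restrict_partition n m d (hyperplanes (n + m) I d)"
      by (fact trop pav hyperplanes_eq)+
    show "d_partition (lat n) d (restrict_partition n m d (hyperplanes (n + m) I d))"
      "translation_invariant n (restrict_partition n m d (hyperplanes (n + m) I d))"
      using J.d_partition_hyperplanes J.translation_invariant_hyperplanes[OF \<open>is_ideal n _\<close>, of d]
      unfolding hyperplanes_eq by blast+
  next
    assume "\<exists>S\<in>hyperplanes (n + m) I d. emb m ` lat n \<subseteq> S"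
    then interpret U: uniform_rank n "restrict_ideal n m I" d
      using uniform_rank_restrict_ideal[OF P assms(2)] by blast
    show "tropical_ideal n (restrict_ideal n m I)" "paving n (restrict_ideal n m I) d"
      "\<forall>A. indep n (restrict_ideal n m I) A \<longleftrightarrow> A \<subseteq> lat n \<and> finite A \<and> card A \<le> d"
      "hyperplanes n (restrict_ideal n m I) (d - 1) = {D. D \<subseteq> lat n \<and> finite D \<and> card D = d - 1}"
      using trop U.paving_uniform U.indep_iff U.hyperplanes_uniform[OF assms(1)] by blast+
  qed
qed

end
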